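(* Let $d=\infty$, $C>0$, ${\boldsymbol\gamma}\in\mathcal S_{d,C}$ and ${\boldsymbol\gamma}^\uparrow=T^\uparrow_{d,C}{\boldsymbol\gamma}$. For ${\boldsymbol\gamma}\in\mathcal W_d$ and $\tau>0$ write ${\boldsymbol\gamma}^{1/\tau}=(\gamma_u^{1/\tau})_{u\in\mathcal U_d}$. Then: (1) for every $\tau>0$, if $\sum_{u\in\mathcal U_d}(\gamma^\uparrow_u)^{1/\tau}<\infty$ then ${\boldsymbol\gamma}^{1/\tau}\in\mathcal S_{d,C^{1/\tau}}$; (2) for every $\tau\ge1$, if ${\boldsymbol\gamma}^{1/\tau}\in\mathcal S_{d,\sqrt2\,C^{1/\tau}}$ then $\sum_{u\in\mathcal U_d}(\gamma^\uparrow_u)^{1/\tau}<\infty$.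
   Context: Let $\mathcal U_\infty$ be the set of all finite subsets of $\mathbb N$. Weights are families ${\boldsymbol\gamma}=(\gamma_u)_{u\in\mathcal U_\infty}$ of non-negative reals; $\mathcal W_\infty$ is the set of all weights. For $C>0$, $\mathcal S_{\infty,C}=\{{\boldsymbol\gamma}\in\mathcal W_\infty:\sum_{v\in\mathcal U_\infty}C^{2|v|}\gamma_v<\infty\}$, and $T^\uparrow_{\infty,C}\colon\mathcal S_{\infty,C}\to\mathcal W_\infty$ is given by $(T^\uparrow_{\infty,C}{\boldsymbol\gamma})_u=\sum_{v\in\mathcal U_\infty,\,u\subseteq v}C^{2|v|}\gamma_v$. *)

theory Defs
  imports "HOL-Analysis.Analysis"
begin

definition U_inf :: "nat set set" where
  "U_inf = {u. finite u}"

text \<open>Weights: nonnegative reals indexed by U_infinity (values at infinite sets are irrelevant).\<close>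
definition W_inf :: "(nat set \<Rightarrow> real) set" where
  "W_inf = {\<gamma>. \<forall>u\<in>U_inf. 0 \<le> \<gamma> u}"

definition S_inf :: "real \<Rightarrow> (nat set \<Rightarrow> real) set" where
  "S_inf C = {\<gamma> \<in> W_inf. (\<lambda>v. C ^ (2 * card v) * \<gamma> v) summable_on U_inf}"

definition T_up :: "real \<Rightarrow> (nat set \<Rightarrow> real) \<Rightarrow> (nat set \<Rightarrow> real)" where
  "T_up C \<gamma> = (\<lambda>u. \<Sum>\<^sub>\<infinity>v\<in>{v \<in> U_inf. u \<subseteq> v}. C ^ (2 * card v) * \<gamma> v)"

definition wpow :: "real \<Rightarrow> (nat set \<Rightarrow> real) \<Rightarrow> (nat set \<Rightarrow> real)" where
  "wpow \<tau> \<gamma> = (\<lambda>u. \<gamma> u powr (1 / \<tau>))"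

end

theory Submission
  imports Defs
begin

text \<open>Put \<open>a v = C^(2|v|) * \<gamma> v\<close> and \<open>p = 1/\<tau>\<close>. Part (1) follows from \<open>a u \<le> T_up C \<gamma> u\<close>. For part (2),
  \<open>p \<le> 1\<close> makes \<open>t \<mapsto> t^p\<close> subadditive on sums, so \<open>\<Sum>\<^sub>u (T_up C \<gamma> u)^p\<close> is at most the
  double sum of \<open>(a v)^p\<close> over all pairs \<open>u \<subseteq> v\<close>; as \<open>v\<close> has \<open>2^|v|\<close> subsets, this is the
  sum of \<open>2^|v| * (a v)^p = (\<surd>2)^(2|v|) * (a v)^p\<close>.\<close>

lemma powr_infsum_le_infsum_powr:
  fixes a :: "'a \<Rightarrow> real"
  assumes summable: "(\<lambda>v. a v powr p) summable_on A"
    and nonneg: "\<And>v. v \<in> A \<Longrightarrow> a v \<ge> 0" and p: "0 < p" "p \<le> 1"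
  shows "(infsum a A) powr p \<le> (\<Sum>\<^sub>\<infinity>v\<in>A. a v powr p)"
proof -
  define S where "S = (\<Sum>\<^sub>\<infinity>v\<in>A. a v powr p)"
  define q where "q = (1 - p) / p"
  have "q \<ge> 0" using p by (simp add: q_def)
  have "S \<ge> 0" unfolding S_def by (rule infsum_nonneg) auto
  have term_le: "a v powr p \<le> S" if "v \<in> A" for v
    using finite_sum_le_infsum[OF summable, of "{v}"] that by (simp add: S_def)
  text \<open>Since \<open>(a v)^(1-p) = ((a v)^p)^q \<le> S^q\<close>, summing gives \<open>\<Sum>a \<le> S^(1+q) = S^(1/p)\<close>.\<close>
  have dominated: "a v \<le> a v powr p * S powr q" if "v \<in> A" for v
  proof (cases "a v = 0")
    case False
    then have "a v > 0" using nonneg[OF that] by simp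
    have "a v = a v powr p * (a v powr p) powr q"
      using \<open>a v > 0\<close> p by (simp add: powr_powr q_def powr_add[symmetric])
    also have "\<dots> \<le> a v powr p * S powr q"
      using term_le[OF that] \<open>q \<ge> 0\<close> by (intro mult_left_mono powr_mono2) auto
    finally show ?thesis .
  qed simp
  have bound_summable: "(\<lambda>v. a v powr p * S powr q) summable_on A"
    using summable by (rule summable_on_cmult_left)
  then have "a summable_on A"
    by (rule summable_on_comparison_test) (use dominated nonneg in auto)
  then have "infsum a A \<le> (\<Sum>\<^sub>\<infinity>v\<in>A. a v powr p * S powr q)"
    using bound_summable dominated by (rule infsum_mono)
  also have "\<dots> = S * S powr q"
    unfolding S_def by (rule infsum_cmult_left) (use summable in auto)
  also have "\<dots> = S powr (1 / p)"
  proof (cases "S = 0")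
    case False
    then have "S * S powr q = S powr (1 + q)"
      using \<open>S \<ge> 0\<close> by (simp add: powr_add)
    also have "1 + q = 1 / p" using p by (simp add: q_def field_simps)
    finally show ?thesis .
  qed simp
  finally have "(infsum a A) powr p \<le> (S powr (1 / p)) powr p"
    using p nonneg by (intro powr_mono2) (auto intro: infsum_nonneg)
  also have "\<dots> = S" using p \<open>S \<ge> 0\<close> by (simp add: powr_powr)
  finally show ?thesis unfolding S_def .
qed

lemma summable_on_infsum_supersets:
  fixes b :: "'a set \<Rightarrow> real"
  assumes summable: "(\<lambda>v. 2 ^ card v * b v) summable_on F"
    and nonneg: "\<And>v. v \<in> F \<Longrightarrow> b v \<ge> 0"
    and finite: "\<And>v. v \<in> F \<Longrightarrow> finite v"
    and downward_closed: "\<And>u v. v \<in> F \<Longrightarrow> u \<subseteq> v \<Longrightarrow> u \<in> F"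
  shows "(\<lambda>u. \<Sum>\<^sub>\<infinity>v\<in>{v \<in> F. u \<subseteq> v}. b v) summable_on F"
proof -
  have "(\<lambda>(v, u). b v) summable_on Sigma F Pow"
  proof (rule summable_on_SigmaI[OF _ summable])
    fix v assume "v \<in> F"
    then show "((\<lambda>u. case (v, u) of (v, u) \<Rightarrow> b v) has_sum 2 ^ card v * b v) (Pow v)"
      using finite by (intro has_sum_finiteI) (auto simp: card_Pow)
  qed (use nonneg in auto)
  moreover have "Sigma F (\<lambda>u. {v \<in> F. u \<subseteq> v}) = prod.swap ` Sigma F Pow"
    using downward_closed by (auto simp: image_iff)
  ultimately have double: "(\<lambda>(u, v). b v) summable_on Sigma F (\<lambda>u. {v \<in> F. u \<subseteq> v})"
    by (simp add: summable_on_reindex o_def case_prod_unfold)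
  have "b summable_on F"
  proof (rule summable_on_comparison_test[OF summable])
    show "b v \<le> 2 ^ card v * b v" if "v \<in> F" for v
      using nonneg[OF that] by (simp add: mult_le_cancel_right1)
  qed (use nonneg in auto)
  then have "b summable_on {v \<in> F. u \<subseteq> v}" for u
    by (rule summable_on_subset) auto
  with summable_on_SigmaD[OF double] show ?thesis by simp
qed

lemma weight_le_T_up:
  assumes "\<gamma> \<in> S_inf C" and "u \<in> U_inf"
  shows "C ^ (2 * card u) * \<gamma> u \<le> T_up C \<gamma> u"
proof -
  have "C ^ (2 * card u) * \<gamma> u = (\<Sum>v\<in>{u}. C ^ (2 * card v) * \<gamma> v)"
    by simp
  also have "\<dots> \<le> T_up C \<gamma> u"
    unfolding T_up_def
  proof (rule finite_sum_le_infsum)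
    show "(\<lambda>v. C ^ (2 * card v) * \<gamma> v) summable_on {v \<in> U_inf. u \<subseteq> v}"
      using assms(1) unfolding S_inf_def by (auto intro: summable_on_subset)
  qed (use assms in \<open>auto simp: S_inf_def W_inf_def\<close>)
  finally show ?thesis .
qed

lemma wpow_in_S_inf_iff:
  assumes "C > 0" and "\<gamma> \<in> W_inf"
  shows "wpow \<tau> \<gamma> \<in> S_inf (c * C powr (1 / \<tau>)) \<longleftrightarrow>
    (\<lambda>v. c ^ (2 * card v) * (C ^ (2 * card v) * \<gamma> v) powr (1 / \<tau>)) summable_on U_inf"
proof -
  have "(c * C powr (1 / \<tau>)) ^ (2 * card v) * wpow \<tau> \<gamma> v
      = c ^ (2 * card v) * (C ^ (2 * card v) * \<gamma> v) powr (1 / \<tau>)" if "v \<in> U_inf" for v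
    using assms that
    by (simp add: wpow_def W_inf_def powr_mult power_mult_distrib powr_realpow[symmetric]
        powr_powr mult.commute)
  then show ?thesis
    unfolding S_inf_def by (simp add: W_inf_def wpow_def cong: summable_on_cong)
qed

lemma S_inf_wpow_if_summable_wpow_T_up:
  assumes "C > 0" and \<gamma>: "\<gamma> \<in> S_inf C" and "\<tau> > 0"
    and summable: "wpow \<tau> (T_up C \<gamma>) summable_on U_inf"
  shows "wpow \<tau> \<gamma> \<in> S_inf (C powr (1 / \<tau>))"
proof -
  have "(\<lambda>v. (C ^ (2 * card v) * \<gamma> v) powr (1 / \<tau>)) summable_on U_inf"
  proof (rule summable_on_comparison_test[OF summable])
    fix v assume "v \<in> U_inf"
    with \<gamma> show "(C ^ (2 * card v) * \<gamma> v) powr (1 / \<tau>) \<le> wpow \<tau> (T_up C \<gamma>) v"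
      using \<open>\<tau> > 0\<close> weight_le_T_up unfolding wpow_def S_inf_def W_inf_def
      by (intro powr_mono2) auto
  qed auto
  with wpow_in_S_inf_iff[OF \<open>C > 0\<close>, of \<gamma> \<tau> 1] \<gamma> show ?thesis
    by (simp add: S_inf_def)
qed

lemma summable_wpow_T_up_if_S_inf_wpow:
  assumes "C > 0" and \<gamma>: "\<gamma> \<in> S_inf C" and "\<tau> \<ge> 1"
    and S_inf: "wpow \<tau> \<gamma> \<in> S_inf (sqrt 2 * C powr (1 / \<tau>))"
  shows "wpow \<tau> (T_up C \<gamma>) summable_on U_inf"
proof -
  define a where "a v = C ^ (2 * card v) * \<gamma> v" for v
  have a_nonneg: "a v \<ge> 0" if "v \<in> U_inf" for v
    using \<gamma> that by (simp add: a_def S_inf_def W_inf_def)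
  have weighted: "(\<lambda>v. 2 ^ card v * a v powr (1 / \<tau>)) summable_on U_inf"
    using S_inf wpow_in_S_inf_iff[OF \<open>C > 0\<close>, of \<gamma> \<tau> "sqrt 2"] \<gamma>
    by (simp add: S_inf_def a_def power_mult)
  then have supersets: "(\<lambda>u. \<Sum>\<^sub>\<infinity>v\<in>{v \<in> U_inf. u \<subseteq> v}. a v powr (1 / \<tau>)) summable_on U_inf"
    by (rule summable_on_infsum_supersets) (auto simp: U_inf_def intro: finite_subset)
  have a_powr_summable: "(\<lambda>v. a v powr (1 / \<tau>)) summable_on U_inf"
    by (rule summable_on_comparison_test[OF weighted]) (auto simp: mult_le_cancel_right1)
  show ?thesis
  proof (rule summable_on_comparison_test[OF supersets])
    fix u assume "u \<in> U_inf"
    show "wpow \<tau> (T_up C \<gamma>) u \<le> (\<Sum>\<^sub>\<infinity>v\<in>{v \<in> U_inf. u \<subseteq> v}. a v powr (1 / \<tau>))"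
      unfolding wpow_def T_up_def a_def[symmetric] using \<open>\<tau> \<ge> 1\<close> a_nonneg
      by (intro powr_infsum_le_infsum_powr summable_on_subset[OF a_powr_summable]) auto
  qed (simp add: wpow_def)
qed

theorem mainTheorem5:
  fixes C :: real and \<gamma> :: "nat set \<Rightarrow> real"
  assumes "C > 0" and "\<gamma> \<in> S_inf C"
  shows "(\<forall>\<tau>>0. wpow \<tau> (T_up C \<gamma>) summable_on U_inf
              \<longrightarrow> wpow \<tau> \<gamma> \<in> S_inf (C powr (1 / \<tau>)))
       \<and> (\<forall>\<tau>\<ge>1. wpow \<tau> \<gamma> \<in> S_inf (sqrt 2 * C powr (1 / \<tau>))
              \<longrightarrow> wpow \<tau> (T_up C \<gamma>) summable_on U_inf)"
  using S_inf_wpow_if_summable_wpow_T_up summable_wpow_T_up_if_S_inf_wpow assms by blast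

end
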